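(* Assume (V1), (V2), (V3), and (In), and let $\delta>0$. Then for every $n\in\mathbb{N}$ and all $t\ge\delta$, $$\mathrm{TV}[v(\hat\rho^n(t))]=\mathrm{TV}[v(\check\rho^n(t))]\le C_\delta,\qquad C_\delta:=3(v_{\max}-v(R))+2\,\frac{\bar x_{\max}-\bar x_{\min}}{\delta}.$$ In particular $(v(\hat\rho^n))_n$ is uniformly bounded in $L^\infty([\delta,\infty);BV(\mathbb{R};[v(R),v_{\max}]))$ and $(v(\check\rho^n))_n$ is uniformly bounded in $L^\infty([\delta,\infty);BV([0,L];[v(R),v_{\max}]))$.
   Context: (V1): $v\in C^1([0,\infty))$ strictly decreasing; (V2): $v(0)=v_{\max}\in\mathbb{R}$; (V3): $\rho\mapsto\rho\,v'(\rho)$ is non-increasing on $[0,\infty)$. $\mathcal{M}_L$: nonnegative compactly supported Radon measures on $\mathbb{R}$ of mass $L>0$. (In): $\bar\rho\in\mathcal{M}_L\cap L^\infty(\mathbb{R})$; $R:=\|\bar\rho\|_{L^\infty}$; $[\bar x_{\min},\bar x_{\max}]$ smallest closed interval containing $\mathrm{supp}\,\bar\rho$. For $n\in\mathbb{N}$: $N_n=2^n$, $\ell_n=2^{-n}L$, $\bar x^n_0=\bar x_{\min}$, $\bar x^n_i=\sup\{x:\int_{\bar x^n_{i-1}}^x\bar\rho<\ell_n\}$; $(x^n_i(t))$ solves $\dot x^n_{N_n}=v_{\max}$, $\dot x^n_i=v(\ell_n/(x^n_{i+1}-x^n_i))$, $x^n_i(0)=\bar x^n_i$; $y^n_i:=\ell_n/(x^n_{i+1}-x^n_i)$.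 $\hat\rho^n(t,x):=\sum_{i=0}^{N_n-1}y^n_i(t)\chi_{[x^n_i(t),x^n_{i+1}(t))}(x)$, $\check\rho^n(t,z):=\sum_{i=0}^{N_n-1}y^n_i(t)\chi_{[i\ell_n,(i+1)\ell_n)}(z)$, $z\in[0,L]$. *)

theory Defs
  imports "HOL-Analysis.Analysis"
begin

definition TV :: "(real \<Rightarrow> real) \<Rightarrow> ereal" where
  "TV f = (SUP p \<in> {(m::nat, s::nat \<Rightarrow> real). \<forall>k<m. s k \<le> s (Suc k)}.
              ereal (\<Sum>k<fst p. \<bar>f (snd p (Suc k)) - f (snd p k)\<bar>))"

definition Linf_norm :: "(real \<Rightarrow> real) \<Rightarrow> real" where
  "Linf_norm f = Inf {c. AE x in lborel. \<bar>f x\<bar> \<le> c}"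

definition msupp :: "(real \<Rightarrow> real) \<Rightarrow> real set" where
  "msupp rho = {x. \<forall>e>0. (LINT y:{x-e..x+e}|lborel. rho y) > 0}"

definition xmin :: "(real \<Rightarrow> real) \<Rightarrow> real" where
  "xmin rho = Inf (msupp rho)"

definition xmax :: "(real \<Rightarrow> real) \<Rightarrow> real" where
  "xmax rho = Sup (msupp rho)"

definition Nn :: "nat \<Rightarrow> nat" where "Nn n = 2 ^ n"

definition elln :: "real \<Rightarrow> nat \<Rightarrow> real" where "elln L n = L / 2 ^ n"

primrec xbar :: "(real \<Rightarrow> real) \<Rightarrow> real \<Rightarrow> nat \<Rightarrow> nat \<Rightarrow> real" where
  "xbar rho L n 0 = xmin rho"
| "xbar rho L n (Suc i) =
     Sup {x. (LINT y:{xbar rho L n i..x}|lborel. rho y) < elln L n}"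

definition ydisc :: "real \<Rightarrow> (nat \<Rightarrow> nat \<Rightarrow> real \<Rightarrow> real) \<Rightarrow> nat \<Rightarrow> nat \<Rightarrow> real \<Rightarrow> real" where
  "ydisc L x n i t = elln L n / (x n (Suc i) t - x n i t)"

definition rho_hat :: "real \<Rightarrow> (nat \<Rightarrow> nat \<Rightarrow> real \<Rightarrow> real) \<Rightarrow> nat \<Rightarrow> real \<Rightarrow> real \<Rightarrow> real" where
  "rho_hat L x n t z = (\<Sum>i<Nn n. ydisc L x n i t * indicator {x n i t ..< x n (Suc i) t} z)"

definition rho_check :: "real \<Rightarrow> (nat \<Rightarrow> nat \<Rightarrow> real \<Rightarrow> real) \<Rightarrow> nat \<Rightarrow> real \<Rightarrow> real \<Rightarrow> real" where
  "rho_check L x n t z = (\<Sum>i<Nn n. ydisc L x n i t *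
       indicator {real i * elln L n ..< real (Suc i) * elln L n} z)"

definition FTL_solution ::
  "(real \<Rightarrow> real) \<Rightarrow> real \<Rightarrow> (real \<Rightarrow> real) \<Rightarrow> real \<Rightarrow> (nat \<Rightarrow> nat \<Rightarrow> real \<Rightarrow> real) \<Rightarrow> nat \<Rightarrow> bool" where
  "FTL_solution v vmax rho L x n \<longleftrightarrow>
     (\<forall>i\<le>Nn n. x n i 0 = xbar rho L n i) \<and>
     (\<forall>t\<ge>0. \<forall>i<Nn n. x n i t < x n (Suc i) t) \<and>
     (\<forall>t\<ge>0. (x n (Nn n) has_real_derivative vmax) (at t within {0..})) \<and>
     (\<forall>t\<ge>0. \<forall>i<Nn n. (x n i has_real_derivative v (ydisc L x n i t)) (at t within {0..}))"

end

theory Submission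
  imports Defs
begin

text \<open>Write \<open>W\<^sub>i = v(y\<^sub>i)\<close> for the velocity of particle \<open>i\<close> and \<open>W\<^sub>N = v\<^sub>m\<^sub>a\<^sub>x\<close> for the leader.
  On the steps of either piecewise constant density, \<open>v(\<rho>)\<close> takes, from left to right, the
  values \<open>v\<^sub>m\<^sub>a\<^sub>x, W\<^sub>0, \<dots>, W\<^sub>N = v\<^sub>m\<^sub>a\<^sub>x\<close>, so both total variations equal the sum of the jumps of this
  sequence, which is twice the sum of its upward jumps. A maximum principle argument using (V3)
  gives the Oleinik-type estimate \<open>t (W\<^sub>i\<^sub>+\<^sub>1 - W\<^sub>i) \<le> x\<^sub>i\<^sub>+\<^sub>1 - x\<^sub>i\<close>, so the upward jumps sum to at
  most \<open>(x\<^sub>N - x\<^sub>0)/t\<close>. A second maximum principle argument shows that no gap drops below its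
  initial lower bound \<open>ell\<^sub>n/R\<close>, i.e. \<open>y\<^sub>i \<le> R\<close>; hence the tail moves with speed at least \<open>v(R)\<close>, the
  leader with speed \<open>v\<^sub>m\<^sub>a\<^sub>x\<close>, and \<open>x\<^sub>N(t) - x\<^sub>0(t) \<le> x\<^sub>m\<^sub>a\<^sub>x - x\<^sub>m\<^sub>i\<^sub>n + (v\<^sub>m\<^sub>a\<^sub>x - v(R)) t\<close>.\<close>

section \<open>Cumulative mass of a bounded density\<close>

lemma AE_abs_le_imp_nonneg:
  fixes f :: "real \<Rightarrow> real"
  assumes "AE y in lborel. \<bar>f y\<bar> \<le> c"
  shows "0 \<le> c"
proof (rule ccontr)
  assume "\<not> 0 \<le> c"
  have "AE y in (lborel::real measure). False"
    using assms by (rule eventually_mono) (use \<open>\<not> 0 \<le> c\<close> in linarith)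
  hence "ae_filter (lborel::real measure) = bot"
    using trivial_limit_def by blast
  thus False by (simp add: ae_filter_eq_bot_iff)
qed

lemma AE_abs_le_Linf_norm:
  assumes "\<exists>c. AE y in lborel. \<bar>rho y\<bar> \<le> c"
  shows "AE y in lborel. \<bar>rho y\<bar> \<le> Linf_norm rho"
proof -
  define C where "C = {c. AE y in lborel. \<bar>rho y\<bar> \<le> c}"
  have ne: "C \<noteq> {}" using assms by (auto simp: C_def)
  have bdd: "bdd_below C"
    unfolding bdd_below_def C_def using AE_abs_le_imp_nonneg by blast
  have "AE y in lborel. \<bar>rho y\<bar> \<le> Inf C + 1 / real (Suc k)" for k
  proof -
    have "Inf C < Inf C + 1 / real (Suc k)" by simp
    then obtain c where "c \<in> C" "c < Inf C + 1 / real (Suc k)"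
      using cInf_less_iff[OF ne bdd] by blast
    thus ?thesis unfolding C_def by (auto elim!: eventually_mono)
  qed
  hence "AE y in lborel. \<forall>k. \<bar>rho y\<bar> \<le> Inf C + 1 / real (Suc k)"
    by (simp add: AE_all_countable)
  hence "AE y in lborel. \<bar>rho y\<bar> \<le> Inf C"
  proof (rule eventually_mono)
    fix y assume le: "\<forall>k. \<bar>rho y\<bar> \<le> Inf C + 1 / real (Suc k)"
    show "\<bar>rho y\<bar> \<le> Inf C"
    proof (rule ccontr)
      assume "\<not> \<bar>rho y\<bar> \<le> Inf C"
      then obtain k where "k > 0" "inverse (real k) < \<bar>rho y\<bar> - Inf C"
        using ex_inverse_of_nat_less[of "\<bar>rho y\<bar> - Inf C"] by auto
      moreover have "inverse (real (Suc k)) \<le> inverse (real k)"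
        using \<open>k > 0\<close> by (simp add: le_imp_inverse_le)
      ultimately show False using le[rule_format, of k] by (simp add: inverse_eq_divide)
    qed
  qed
  thus ?thesis by (simp add: Linf_norm_def C_def)
qed

locale bounded_density =
  fixes rho :: "real \<Rightarrow> real" and R :: real
  assumes integrable_density: "integrable lborel rho"
    and density_nonneg: "AE y in lborel. rho y \<ge> 0"
    and density_bounded: "AE y in lborel. \<bar>rho y\<bar> \<le> R"
begin

definition cum_mass :: "real \<Rightarrow> real" where
  "cum_mass x = (LINT y:{..x}|lborel. rho y)"

lemma bound_nonneg: "0 \<le> R"
  using AE_abs_le_imp_nonneg[OF density_bounded] .

lemma set_integrable_density: "A \<in> sets borel \<Longrightarrow> set_integrable lborel A rho"
  unfolding set_integrable_def using integrable_density by (intro integrable_mult_indicator) auto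

lemma borel_measurable_density: "rho \<in> borel_measurable borel"
  using integrable_density by auto

lemma set_integral_density_nonneg: "0 \<le> (LINT y:A|lborel. rho y)"
  unfolding set_lebesgue_integral_def
  by (rule integral_nonneg_AE) (use density_nonneg in \<open>auto simp: indicator_def\<close>)

lemma set_integral_Icc_eq_cum_mass_diff:
  assumes "a \<le> b"
  shows "(LINT y:{a..b}|lborel. rho y) = cum_mass b - cum_mass a"
proof -
  have "{..b} = {..a} \<union> {a<..b}" using assms by auto
  hence "cum_mass b = cum_mass a + (LINT y:{a<..b}|lborel. rho y)"
    unfolding cum_mass_def by (simp, subst set_integral_Un) (auto intro: set_integrable_density)
  moreover have "(LINT y:{a..b}|lborel. rho y) = (LINT y:{a<..b}|lborel. rho y)"
    by (rule set_integral_cong_set)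
      (use borel_measurable_density AE_lborel_singleton[of a]
        in \<open>auto simp: set_borel_measurable_def elim!: eventually_mono\<close>)
  ultimately show ?thesis by simp
qed

lemma set_integral_Icc_le:
  assumes "a \<le> b"
  shows "(LINT y:{a..b}|lborel. rho y) \<le> R * (b - a)"
proof -
  have "(LINT y:{a..b}|lborel. rho y) \<le> (LINT y:{a..b}|lborel. R)"
    by (rule set_integral_mono_AE)
      (use set_integrable_density density_bounded borel_integrable_atLeastAtMost'[of a b "\<lambda>_. R"]
        in \<open>auto elim!: eventually_mono\<close>)
  also have "\<dots> = R * (b - a)" using assms by (simp add: set_integral_const)
  finally show ?thesis .
qed

lemma cum_mass_mono: "a \<le> b \<Longrightarrow> cum_mass a \<le> cum_mass b"
  using set_integral_Icc_eq_cum_mass_diff set_integral_density_nonneg by (metis diff_ge_0_iff_ge)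

lemma lipschitz_on_cum_mass: "R-lipschitz_on UNIV cum_mass"
proof (rule lipschitz_onI)
  fix a b :: real
  have "\<bar>cum_mass b - cum_mass a\<bar> \<le> R * \<bar>b - a\<bar>" if "a \<le> b" for a b
    using set_integral_Icc_eq_cum_mass_diff[OF that] set_integral_Icc_le[OF that]
      cum_mass_mono[OF that] that by simp
  from this[of a b] this[of b a] show "dist (cum_mass a) (cum_mass b) \<le> R * dist a b"
    by (cases "a \<le> b") (auto simp: dist_real_def abs_minus_commute)
qed (rule bound_nonneg)

lemma continuous_cum_mass: "continuous_on UNIV cum_mass"
  using lipschitz_on_continuous_on[OF lipschitz_on_cum_mass] .

lemma cum_mass_tendsto_integral: "(\<lambda>k::nat. cum_mass (real k)) \<longlonglongrightarrow> (LINT y|lborel. rho y)"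
proof -
  have "(\<lambda>k::nat. integral\<^sup>L lborel (\<lambda>y. indicator {..real k} y *\<^sub>R rho y)) \<longlonglongrightarrow> integral\<^sup>L lborel rho"
  proof (rule integral_dominated_convergence[where w="\<lambda>y. \<bar>rho y\<bar>"])
    show "AE y in lborel. (\<lambda>k. indicator {..real k} y *\<^sub>R rho y) \<longlonglongrightarrow> rho y"
    proof (rule AE_I2, rule tendsto_eventually)
      fix y :: real
      obtain k :: nat where "y \<le> real k" using real_arch_simple by blast
      thus "\<forall>\<^sub>F i in sequentially. indicator {..real i} y *\<^sub>R rho y = rho y"
        unfolding eventually_sequentially by (intro exI[of _ k]) (auto simp: indicator_def)
    qed
  qed (use integrable_density borel_measurable_density in \<open>auto simp: indicator_def\<close>)
  thus ?thesis unfolding cum_mass_def set_lebesgue_integral_def .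
qed

lemma cum_mass_tendsto_0: "(\<lambda>k::nat. cum_mass (- real k)) \<longlonglongrightarrow> 0"
proof -
  have "(\<lambda>k::nat. integral\<^sup>L lborel (\<lambda>y. indicator {..- real k} y *\<^sub>R rho y))
      \<longlonglongrightarrow> integral\<^sup>L lborel (\<lambda>y::real. 0::real)"
  proof (rule integral_dominated_convergence[where w="\<lambda>y. \<bar>rho y\<bar>"])
    show "AE y in lborel. (\<lambda>k. indicator {..- real k} y *\<^sub>R rho y) \<longlonglongrightarrow> 0"
    proof (rule AE_I2, rule tendsto_eventually)
      fix y :: real
      obtain k :: nat where "- y < real k" using reals_Archimedean2 by blast
      thus "\<forall>\<^sub>F i in sequentially. indicator {..- real i} y *\<^sub>R rho y = 0"
        unfolding eventually_sequentially by (intro exI[of _ k]) (auto simp: indicator_def)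
    qed
  qed (use integrable_density borel_measurable_density in \<open>auto simp: indicator_def\<close>)
  thus ?thesis unfolding cum_mass_def set_lebesgue_integral_def by simp
qed

end

locale finite_mass_density = bounded_density +
  fixes L :: real
  assumes mass: "(LINT y|lborel. rho y) = L"
    and bounded_support: "bounded (msupp rho)"
    and mass_pos: "L > 0"
begin

lemma has_field_derivative_cum_mass_outside_support:
  assumes "p \<notin> msupp rho"
  shows "(cum_mass has_field_derivative 0) (at p)"
proof -
  obtain e where e: "e > 0" "\<not> (LINT y:{p-e..p+e}|lborel. rho y) > 0"
    using assms unfolding msupp_def by blast
  hence "cum_mass (p + e) = cum_mass (p - e)"
    using set_integral_density_nonneg[of "{p-e..p+e}"]
      set_integral_Icc_eq_cum_mass_diff[of "p - e" "p + e"] by simp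
  hence const: "cum_mass p = cum_mass y" if "y \<in> {p-e<..<p+e}" for y
    using that cum_mass_mono[of "p - e" y] cum_mass_mono[of y "p + e"]
      cum_mass_mono[of "p - e" p] cum_mass_mono[of p "p + e"] e(1) by force
  show ?thesis
    by (rule has_field_derivative_transform_within_open[of "\<lambda>_. cum_mass p" 0 p "{p-e<..<p+e}"])
      (use e(1) const in auto)
qed

lemma cum_mass_eq_outside_support:
  assumes "a \<le> b" "\<And>p. a < p \<Longrightarrow> p < b \<Longrightarrow> p \<notin> msupp rho"
  shows "cum_mass b = cum_mass a"
proof (cases "a = b")
  case False
  have "continuous_on {a..b} cum_mass"
    using continuous_on_subset[OF continuous_cum_mass] by blast
  thus ?thesis
    using DERIV_isconst2[of a b cum_mass b] assms False has_field_derivative_cum_mass_outside_support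
    by auto
qed simp

lemma cum_mass_eq_mass:
  assumes "xmax rho \<le> x"
  shows "cum_mass x = L"
proof -
  have "p \<notin> msupp rho" if "xmax rho < p" for p
    using cSup_upper[OF _ bounded_imp_bdd_above[OF bounded_support], of p] that
    unfolding xmax_def by force
  hence const: "cum_mass y = cum_mass (xmax rho)" if "xmax rho \<le> y" for y
    using cum_mass_eq_outside_support[OF that] by auto
  obtain k0 :: nat where "xmax rho \<le> real k0" using real_arch_simple by blast
  hence "\<forall>\<^sub>F k in sequentially. cum_mass (real k) = cum_mass (xmax rho)"
    unfolding eventually_sequentially
    by (intro exI[of _ k0]) (auto intro!: const simp del: of_nat_le_iff)
  hence "(\<lambda>k. cum_mass (real k)) \<longlonglongrightarrow> cum_mass (xmax rho)"
    by (rule tendsto_eventually)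
  hence "cum_mass (xmax rho) = L"
    using LIMSEQ_unique cum_mass_tendsto_integral mass by metis
  thus ?thesis using const[OF assms] by simp
qed

lemma cum_mass_eq_0:
  assumes "x \<le> xmin rho"
  shows "cum_mass x = 0"
proof -
  have "p \<notin> msupp rho" if "p < xmin rho" for p
    using cInf_lower[OF _ bounded_imp_bdd_below[OF bounded_support], of p] that
    unfolding xmin_def by force
  hence const: "cum_mass y = cum_mass (xmin rho)" if "y \<le> xmin rho" for y
    using cum_mass_eq_outside_support[OF that] by auto
  obtain k0 :: nat where "- xmin rho \<le> real k0" using real_arch_simple by blast
  hence "\<forall>\<^sub>F k in sequentially. cum_mass (- real k) = cum_mass (xmin rho)"
    unfolding eventually_sequentially
    by (intro exI[of _ k0]) (auto intro!: const simp del: of_nat_le_iff)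
  hence "(\<lambda>k. cum_mass (- real k)) \<longlonglongrightarrow> cum_mass (xmin rho)"
    by (rule tendsto_eventually)
  hence "cum_mass (xmin rho) = 0"
    using LIMSEQ_unique cum_mass_tendsto_0 by metis
  thus ?thesis using const[OF assms] by simp
qed

lemma cum_mass_Sup_sublevel:
  assumes "cum_mass a < \<tau>" "\<tau> \<le> L"
  shows "cum_mass (Sup {x. cum_mass x < \<tau>}) = \<tau>" and "Sup {x. cum_mass x < \<tau>} \<le> xmax rho"
proof -
  define S where "S = {x. cum_mass x < \<tau>}"
  have ne: "S \<noteq> {}" using assms(1) by (auto simp: S_def)
  have ub: "x \<le> xmax rho" if "x \<in> S" for x
    using that assms(2) cum_mass_eq_mass[of x] by (cases "xmax rho \<le> x") (auto simp: S_def)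
  hence bdd: "bdd_above S" by (auto simp: bdd_above_def)
  have "open S"
    unfolding S_def by (rule open_Collect_less[OF continuous_cum_mass continuous_on_const])
  have "Sup S \<notin> S"
  proof
    assume "Sup S \<in> S"
    then obtain e where "e > 0" "ball (Sup S) e \<subseteq> S" using \<open>open S\<close> openE by blast
    hence "Sup S + e/2 \<in> S" by (auto simp: dist_real_def)
    thus False using cSup_upper[OF _ bdd, of "Sup S + e/2"] \<open>e > 0\<close> by auto
  qed
  have "closure S \<subseteq> {x. cum_mass x \<le> \<tau>}"
    by (rule closure_minimal)
      (auto simp: S_def intro!: closed_Collect_le[OF continuous_cum_mass continuous_on_const])
  hence "cum_mass (Sup S) \<le> \<tau>" using closure_contains_Sup[OF ne bdd] by auto
  with \<open>Sup S \<notin> S\<close> show "cum_mass (Sup {x. cum_mass x < \<tau>}) = \<tau>" by (auto simp: S_def)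
  show "Sup {x. cum_mass x < \<tau>} \<le> xmax rho"
    using cSup_least[OF ne] ub by (simp add: S_def)
qed

lemma xbar_Suc_eq_Sup:
  assumes "cum_mass (xbar rho L n i) = real i * elln L n"
  shows "xbar rho L n (Suc i) = Sup {x. cum_mass x < real (Suc i) * elln L n}"
proof -
  let ?a = "xbar rho L n i"
  have ell_pos: "elln L n > 0" using mass_pos by (simp add: elln_def)
  have "(LINT y:{?a..x}|lborel. rho y) < elln L n \<longleftrightarrow> cum_mass x < real (Suc i) * elln L n" for x
  proof (cases "?a \<le> x")
    case True
    hence "(LINT y:{?a..x}|lborel. rho y) = cum_mass x - real i * elln L n"
      using set_integral_Icc_eq_cum_mass_diff[OF True] assms by linarith
    moreover have "real (Suc i) * elln L n = real i * elln L n + elln L n"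
      by (simp add: algebra_simps)
    ultimately show ?thesis by auto
  next
    case False
    thus ?thesis using cum_mass_mono[of x ?a] assms ell_pos
      by (simp add: set_lebesgue_integral_def algebra_simps)
  qed
  thus ?thesis by simp
qed

lemma cum_mass_xbar: "i \<le> 2 ^ n \<Longrightarrow> cum_mass (xbar rho L n i) = real i * elln L n"
proof (induction i)
  case 0
  show ?case using cum_mass_eq_0[of "xmin rho"] by simp
next
  case (Suc i)
  have "real (Suc i) \<le> 2 ^ n" using Suc.prems by (metis of_nat_le_iff of_nat_numeral of_nat_power)
  hence "real (Suc i) * elln L n \<le> L"
    using mass_pos by (simp add: elln_def divide_le_eq mult.commute)
  moreover have "cum_mass (xbar rho L n i) < real (Suc i) * elln L n"
    using Suc mass_pos by (simp add: elln_def field_simps)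
  moreover have "xbar rho L n (Suc i) = Sup {x. cum_mass x < real (Suc i) * elln L n}"
    by (rule xbar_Suc_eq_Sup) (use Suc in simp)
  ultimately show ?case using cum_mass_Sup_sublevel(1) by simp
qed

lemma xbar_le_xmax:
  assumes "0 < i" "i \<le> 2 ^ n"
  shows "xbar rho L n i \<le> xmax rho"
proof -
  obtain j where i: "i = Suc j" using assms(1) gr0_implies_Suc by blast
  have "real i \<le> 2 ^ n" using assms(2) by (metis of_nat_le_iff of_nat_numeral of_nat_power)
  hence "real i * elln L n \<le> L"
    using mass_pos by (simp add: elln_def divide_le_eq mult.commute)
  moreover have "cum_mass (xbar rho L n j) < real i * elln L n"
    using cum_mass_xbar[of j n] assms mass_pos i by (simp add: elln_def field_simps)
  moreover have "xbar rho L n i = Sup {x. cum_mass x < real i * elln L n}"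
    unfolding i by (rule xbar_Suc_eq_Sup) (use cum_mass_xbar[of j n] assms i in simp)
  ultimately show ?thesis using cum_mass_Sup_sublevel(2) by simp
qed

lemma elln_le_xbar_gap:
  assumes "i < 2 ^ n" "xbar rho L n i \<le> xbar rho L n (Suc i)"
  shows "elln L n \<le> R * (xbar rho L n (Suc i) - xbar rho L n i)"
  using set_integral_Icc_le[OF assms(2)] set_integral_Icc_eq_cum_mass_diff[OF assms(2)]
    cum_mass_xbar[of i n] cum_mass_xbar[of "Suc i" n] assms(1)
  by (simp add: algebra_simps)

lemma FTL_initial_gap:
  assumes "FTL_solution v vmax rho L x n" "i < Nn n"
  shows "elln L n \<le> R * (x n (Suc i) 0 - x n i 0)"
proof -
  have "x n i 0 = xbar rho L n i" "x n (Suc i) 0 = xbar rho L n (Suc i)" "x n i 0 < x n (Suc i) 0"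
    using assms by (auto simp: FTL_solution_def)
  thus ?thesis using elln_le_xbar_gap[of i n] assms(2) by (simp add: Nn_def)
qed

lemma FTL_initial_spread:
  assumes "FTL_solution v vmax rho L x n"
  shows "x n (Nn n) 0 - x n 0 0 \<le> xmax rho - xmin rho"
  using xbar_le_xmax[of "Nn n" n] assms by (simp add: FTL_solution_def Nn_def)

end

section \<open>A maximum principle for finitely many functions\<close>

lemma has_real_derivative_at_if_within_nonneg:
  fixes f :: "real \<Rightarrow> real"
  assumes "t > 0" "(f has_real_derivative l) (at t within {0..})"
  shows "(f has_real_derivative l) (at t)"
proof -
  have "(f has_real_derivative l) (at t within {0<..})"
    using assms(2) by (rule DERIV_subset) auto
  thus ?thesis using at_within_open[of t "{0<..}"] assms(1) by simp
qed

lemma continuous_on_if_has_real_derivative_within_nonneg: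
  fixes f :: "real \<Rightarrow> real"
  assumes "\<And>t. t \<ge> 0 \<Longrightarrow> \<exists>l. (f has_real_derivative l) (at t within {0..})"
  shows "continuous_on {0..T} f"
proof -
  have "continuous_on {0..} f"
    unfolding continuous_on_eq_continuous_within using assms DERIV_continuous by fastforce
  thus ?thesis by (rule continuous_on_subset) auto
qed

text \<open>At the first time some \<open>F\<^sub>k\<close> reaches \<open>c\<close>, a maximal \<open>F\<^sub>j\<close> is \<open>\<ge> c\<close> and decreasing,
  so it was already \<open>\<ge> c\<close> slightly earlier.\<close>

lemma max_principle_below:
  fixes F :: "nat \<Rightarrow> real \<Rightarrow> real"
  assumes "T \<ge> 0" and cont: "\<And>k. k < N \<Longrightarrow> continuous_on {0..T} (F k)"
    and init: "\<And>k. k < N \<Longrightarrow> F k 0 < c"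
    and decreasing: "\<And>t j. 0 < t \<Longrightarrow> t \<le> T \<Longrightarrow> j < N \<Longrightarrow> c \<le> F j t \<Longrightarrow> (\<forall>k<N. F k t \<le> F j t) \<Longrightarrow>
                        \<exists>l<0. (F j has_real_derivative l) (at t)"
    and "k0 < N"
  shows "F k0 T < c"
proof (rule ccontr)
  assume "\<not> F k0 T < c"
  define A where "A = (\<Union>k\<in>{..<N}. {t \<in> {0..T}. (\<lambda>_. c) t \<le> F k t})"
  have "closed A" unfolding A_def
    by (intro closed_UN finite_lessThan ballI continuous_on_closed_Collect_le continuous_on_const cont)
      auto
  moreover have "T \<in> A" using \<open>\<not> F k0 T < c\<close> \<open>k0 < N\<close> \<open>T \<ge> 0\<close> by (auto simp: A_def not_less)
  hence "A \<noteq> {}" by blast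
  moreover have bdd: "bdd_below A" by (auto simp: A_def bdd_below_def)
  ultimately have "Inf A \<in> A" using closed_contains_Inf by blast
  then obtain k where k: "k < N" "c \<le> F k (Inf A)" "0 \<le> Inf A" "Inf A \<le> T" by (auto simp: A_def)
  have "Inf A \<noteq> 0" using k init[of k] by auto
  hence t_pos: "Inf A > 0" using k by simp
  obtain j where j: "j < N" "F j (Inf A) = Max ((\<lambda>k. F k (Inf A)) ` {..<N})"
    using Max_in[of "(\<lambda>k. F k (Inf A)) ` {..<N}"] k(1) by fastforce
  hence max: "\<forall>k<N. F k (Inf A) \<le> F j (Inf A)" by (auto intro!: Max_ge)
  hence c_le: "c \<le> F j (Inf A)" using k by force
  obtain l where "l < 0" "(F j has_real_derivative l) (at (Inf A))"
    using decreasing[OF t_pos k(4) j(1) c_le max] by blast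
  then obtain d where d: "d > 0" "\<And>h. h > 0 \<Longrightarrow> h < d \<Longrightarrow> F j (Inf A) < F j (Inf A - h)"
    using DERIV_neg_dec_left by blast
  define h where "h = min (d/2) (Inf A / 2)"
  have h: "h > 0" "h < d" "Inf A - h \<ge> 0" using d t_pos by (auto simp: h_def)
  have "Inf A - h \<in> A"
    using d(2)[OF h(1,2)] c_le h k j by (auto simp: A_def intro!: bexI[of _ j])
  hence "Inf A \<le> Inf A - h" by (rule cInf_lower[OF _ bdd])
  thus False using h by simp
qed

section \<open>The follow-the-leader system\<close>

locale follow_the_leader =
  fixes v v' :: "real \<Rightarrow> real" and vmax ell :: real and N :: nat and X :: "nat \<Rightarrow> real \<Rightarrow> real"
  assumes v_deriv: "\<And>r. r \<ge> 0 \<Longrightarrow> (v has_real_derivative v' r) (at r within {0..})"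
    and v_decreasing: "\<And>a b. 0 \<le> a \<Longrightarrow> a < b \<Longrightarrow> v b < v a"
    and v_0: "v 0 = vmax"
    and times_v'_antimono: "\<And>a b. 0 \<le> a \<Longrightarrow> a \<le> b \<Longrightarrow> b * v' b \<le> a * v' a"
    and ell_pos: "ell > 0"
    and positions_ordered: "\<And>t i. t \<ge> 0 \<Longrightarrow> i < N \<Longrightarrow> X i t < X (Suc i) t"
    and leader_deriv: "\<And>t. t \<ge> 0 \<Longrightarrow> (X N has_real_derivative vmax) (at t within {0..})"
    and follower_deriv: "\<And>t i. t \<ge> 0 \<Longrightarrow> i < N \<Longrightarrow>
        (X i has_real_derivative v (ell / (X (Suc i) t - X i t))) (at t within {0..})"
begin

definition gap :: "nat \<Rightarrow> real \<Rightarrow> real" where "gap i t = X (Suc i) t - X i t"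

definition dens :: "nat \<Rightarrow> real \<Rightarrow> real" where "dens i t = ell / gap i t"

definition velocity :: "nat \<Rightarrow> real \<Rightarrow> real" where
  "velocity i t = (if i < N then v (dens i t) else vmax)"

definition slope :: "nat \<Rightarrow> real \<Rightarrow> real" where
  "slope i t = (velocity (Suc i) t - velocity i t) / gap i t"

definition velocity_deriv :: "nat \<Rightarrow> real \<Rightarrow> real" where
  "velocity_deriv i t = (if i < N then - (dens i t * v' (dens i t)) * slope i t else 0)"

lemma gap_pos: "t \<ge> 0 \<Longrightarrow> i < N \<Longrightarrow> gap i t > 0"
  using positions_ordered by (simp add: gap_def)

lemma dens_pos: "t \<ge> 0 \<Longrightarrow> i < N \<Longrightarrow> dens i t > 0"
  using gap_pos ell_pos by (simp add: dens_def)

lemma v_antimono: "0 \<le> a \<Longrightarrow> a \<le> b \<Longrightarrow> v b \<le> v a"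
  using v_decreasing by (cases "a = b") (auto simp: le_less)

lemma v_le_vmax: "0 \<le> a \<Longrightarrow> v a \<le> vmax"
  using v_antimono[of 0 a] v_0 by simp

lemma velocity_le_vmax: "t \<ge> 0 \<Longrightarrow> velocity i t \<le> vmax"
  using v_le_vmax dens_pos by (auto simp: velocity_def less_imp_le)

lemma v'_nonpos:
  assumes "r > 0"
  shows "v' r \<le> 0"
proof (rule ccontr)
  assume "\<not> v' r \<le> 0"
  moreover have "(v has_real_derivative v' r) (at r)"
    using has_real_derivative_at_if_within_nonneg[OF assms v_deriv] assms by simp
  ultimately obtain d where "d > 0" "\<And>h. h > 0 \<Longrightarrow> h < d \<Longrightarrow> v r < v (r + h)"
    using DERIV_pos_inc_right by (metis not_le)
  hence "v r < v (r + d/2)" by simp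
  moreover have "v (r + d/2) < v r" using v_decreasing[of r "r + d/2"] assms \<open>d > 0\<close> by simp
  ultimately show False by simp
qed

lemma has_derivative_position:
  "t \<ge> 0 \<Longrightarrow> i \<le> N \<Longrightarrow> (X i has_real_derivative velocity i t) (at t within {0..})"
  using follower_deriv leader_deriv by (cases "i = N") (auto simp: velocity_def dens_def gap_def)

lemma has_derivative_gap:
  "t \<ge> 0 \<Longrightarrow> i < N \<Longrightarrow>
    (gap i has_real_derivative velocity (Suc i) t - velocity i t) (at t within {0..})"
  unfolding gap_def[abs_def] by (intro DERIV_diff has_derivative_position) auto

lemma has_derivative_velocity:
  assumes "t \<ge> 0" "i \<le> N"
  shows "(velocity i has_real_derivative velocity_deriv i t) (at t within {0..})"
proof (cases "i = N")
  case True
  hence "velocity i = (\<lambda>_. vmax)" by (auto simp: velocity_def)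
  thus ?thesis using True by (simp add: velocity_deriv_def)
next
  case False
  hence i: "i < N" using assms by simp
  have "((\<lambda>t. ell / gap i t) has_real_derivative
      (0 * gap i t - ell * (velocity (Suc i) t - velocity i t)) / (gap i t * gap i t)) (at t within {0..})"
    by (rule DERIV_divide[OF DERIV_const has_derivative_gap[OF assms(1) i]])
      (use gap_pos[OF assms(1) i] in simp)
  moreover have "(v has_real_derivative v' (ell / gap i t)) (at (ell / gap i t))"
    using has_real_derivative_at_if_within_nonneg v_deriv dens_pos[OF assms(1) i]
    by (simp add: dens_def)
  ultimately have "((\<lambda>t. v (ell / gap i t)) has_real_derivative
      v' (ell / gap i t) * ((0 * gap i t - ell * (velocity (Suc i) t - velocity i t)) / (gap i t * gap i t)))
      (at t within {0..})"
    by (rule DERIV_chain2[rotated])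
  moreover have "velocity i = (\<lambda>t. v (ell / gap i t))" using i by (auto simp: velocity_def dens_def)
  moreover have "v' (ell / gap i t) * ((0 * gap i t - ell * (velocity (Suc i) t - velocity i t))
      / (gap i t * gap i t)) = velocity_deriv i t"
    using i gap_pos[OF assms(1) i] by (simp add: velocity_deriv_def slope_def dens_def field_simps)
  ultimately show ?thesis by simp
qed

lemma has_derivative_slope:
  assumes "t \<ge> 0" "i < N"
  shows "(slope i has_real_derivative
      (velocity_deriv (Suc i) t - velocity_deriv i t
        - slope i t * (velocity (Suc i) t - velocity i t)) / gap i t) (at t within {0..})"
proof -
  have "((\<lambda>t. velocity (Suc i) t - velocity i t) has_real_derivative
      velocity_deriv (Suc i) t - velocity_deriv i t) (at t within {0..})"
    using assms by (intro DERIV_diff has_derivative_velocity) auto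
  from DERIV_divide[OF this has_derivative_gap[OF assms]] gap_pos[OF assms]
  show ?thesis unfolding slope_def[abs_def] by (simp add: field_simps power2_eq_square)
qed

text \<open>The perturbation \<open>\<epsilon> (1 + s)\<close> makes the derivative at a minimal gap strictly negative.\<close>

lemma gap_ge:
  assumes "mu > 0" and init: "\<And>i. i < N \<Longrightarrow> mu \<le> gap i 0" and "t \<ge> 0" "i < N"
  shows "mu \<le> gap i t"
proof (rule ccontr)
  assume "\<not> mu \<le> gap i t"
  define eps where "eps = (mu - gap i t) / (2 * (1 + t))"
  have eps: "eps > 0" using \<open>\<not> mu \<le> gap i t\<close> \<open>t \<ge> 0\<close> by (simp add: eps_def)
  define F where "F k s = - (gap k s + eps * (1 + s))" for k s
  have dF: "(F k has_real_derivative - ((velocity (Suc k) s - velocity k s) + eps)) (at s within {0..})"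
    if "s \<ge> 0" "k < N" for k s
    unfolding F_def[abs_def] by (rule derivative_eq_intros has_derivative_gap[OF that] DERIV_const | simp)+
  have "F i t < - mu"
  proof (rule max_principle_below[of t N F])
    fix k assume k: "k < N"
    show "continuous_on {0..t} (F k)"
      using dF k by (intro continuous_on_if_has_real_derivative_within_nonneg) auto
    show "F k 0 < - mu" using init[OF k] eps by (simp add: F_def)
  next
    fix s j assume s: "0 < s" "s \<le> t" and j: "j < N" and max: "\<forall>k<N. F k s \<le> F j s"
    have "velocity j s \<le> velocity (Suc j) s"
    proof (cases "Suc j < N")
      case True
      have "gap j s \<le> gap (Suc j) s" using max True by (simp add: F_def)
      hence "dens (Suc j) s \<le> dens j s"
        unfolding dens_def using gap_pos[of s j] s j ell_pos by (intro divide_left_mono) auto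
      thus ?thesis using v_antimono dens_pos[of s "Suc j"] True j s by (simp add: velocity_def)
    next
      case False
      thus ?thesis using velocity_le_vmax[of s j] s by (simp add: velocity_def)
    qed
    thus "\<exists>l<0. (F j has_real_derivative l) (at s)"
      using has_real_derivative_at_if_within_nonneg[OF s(1) dF] s j eps by force
  qed (use assms in auto)
  moreover have "1 + t \<noteq> 0" using \<open>t \<ge> 0\<close> by simp
  hence "eps * (1 + t) = (mu - gap i t) / 2" by (simp add: eps_def field_simps)
  ultimately show False using \<open>\<not> mu \<le> gap i t\<close> F_def[of i t] by (simp add: field_simps)
qed

lemma dens_le:
  assumes init: "\<And>i. i < N \<Longrightarrow> ell \<le> R * gap i 0" and "t \<ge> 0" "i < N"
  shows "dens i t \<le> R"
proof -
  have "0 < R * gap i 0" using init[OF \<open>i < N\<close>] ell_pos by linarith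
  hence "R > 0" using gap_pos[of 0 i] \<open>i < N\<close> by (simp add: zero_less_mult_iff)
  have "ell / R \<le> gap i t"
    by (rule gap_ge[OF _ _ assms(2,3)])
      (use init \<open>R > 0\<close> ell_pos in \<open>auto simp: pos_divide_le_eq mult.commute\<close>)
  thus ?thesis
    using \<open>R > 0\<close> gap_pos[OF assms(2,3)] by (simp add: dens_def divide_le_eq mult.commute)
qed

lemma v_le_velocity:
  assumes "\<And>i. i < N \<Longrightarrow> ell \<le> R * gap i 0" "0 \<le> R" "t \<ge> 0"
  shows "v R \<le> velocity i t"
  using v_antimono[OF less_imp_le[OF dens_pos] dens_le[OF assms(1,3)]] v_le_vmax[OF assms(2)] assms(3)
  by (simp add: velocity_def)

text \<open>This is where (V3) enters: at a positive jump the particle ahead sees a smaller density,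
  so its factor \<open>-y v'(y)\<close> is at most ours.\<close>

lemma velocity_deriv_Suc_le:
  assumes s: "s \<ge> 0" and j: "j < N" and slope_pos: "slope j s > 0"
    and slope_Suc: "Suc j < N \<Longrightarrow> slope (Suc j) s \<le> slope j s"
  shows "velocity_deriv (Suc j) s \<le> velocity_deriv j s"
proof (cases "Suc j < N")
  case True
  have "velocity (Suc j) s - velocity j s > 0"
    using slope_pos gap_pos[OF s j] by (simp add: slope_def zero_less_divide_iff)
  hence "dens (Suc j) s \<le> dens j s"
    using v_antimono[of "dens j s" "dens (Suc j) s"] dens_pos[OF s j] True
    by (force simp: velocity_def)
  define h where "h k = - (dens k s * v' (dens k s))" for k
  have h: "h (Suc j) \<le> h j"
    using times_v'_antimono \<open>dens (Suc j) s \<le> dens j s\<close> dens_pos[OF s True] by (simp add: h_def)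
  have "0 \<le> h (Suc j)"
    using v'_nonpos dens_pos[OF s True] by (simp add: h_def mult_nonneg_nonpos)
  hence "h (Suc j) * slope (Suc j) s \<le> h (Suc j) * slope j s"
    using slope_Suc[OF True] by (simp add: mult_left_mono)
  also have "\<dots> \<le> h j * slope j s"
    using h slope_pos by (simp add: mult_right_mono)
  finally show ?thesis
    using True j by (simp add: velocity_deriv_def h_def)
next
  case False
  have "dens j s * v' (dens j s) \<le> 0"
    using v'_nonpos dens_pos[OF s j] by (simp add: mult_nonneg_nonpos)
  thus ?thesis
    using False j slope_pos by (simp add: velocity_deriv_def mult_nonpos_nonneg)
qed

lemma oleinik_estimate:
  assumes "t > 0" "i < N"
  shows "t * slope i t \<le> 1"
proof (rule ccontr)
  assume "\<not> t * slope i t \<le> 1"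
  define F where "F k s = s * slope k s" for k s
  define F' where "F' k s = slope k s + s * ((velocity_deriv (Suc k) s - velocity_deriv k s
      - slope k s * (velocity (Suc k) s - velocity k s)) / gap k s)" for k s
  have dF: "(F k has_real_derivative F' k s) (at s within {0..})" if "s \<ge> 0" "k < N" for k s
    using DERIV_mult'[OF DERIV_ident has_derivative_slope[OF that]]
    unfolding F_def[abs_def] F'_def by (simp add: ac_simps)
  have "F i t < F i t"
  proof (rule max_principle_below[of t N F])
    fix k assume "k < N"
    thus "continuous_on {0..t} (F k)"
      using dF by (intro continuous_on_if_has_real_derivative_within_nonneg) auto
    show "F k 0 < F i t" using \<open>\<not> t * slope i t \<le> 1\<close> by (simp add: F_def)
  next
    fix s j assume s: "0 < s" "s \<le> t" and j: "j < N" and above: "F i t \<le> F j s"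
      and max: "\<forall>k<N. F k s \<le> F j s"
    have s_slope: "s * slope j s > 1" using above \<open>\<not> t * slope i t \<le> 1\<close> by (simp add: F_def)
    hence "0 < s * slope j s" by linarith
    hence slope_pos: "slope j s > 0" using s(1) by (simp add: zero_less_mult_iff)
    have "velocity_deriv (Suc j) s \<le> velocity_deriv j s"
      using velocity_deriv_Suc_le[OF _ j slope_pos] max s by (simp add: F_def)
    hence "F' j s \<le> slope j s * (1 - s * slope j s)"
      using s gap_pos[of s j] j slope_pos
      by (simp add: F'_def slope_def divide_right_mono field_simps)
    also have "\<dots> < 0" using slope_pos s_slope by (simp add: mult_pos_neg)
    finally show "\<exists>l<0. (F j has_real_derivative l) (at s)"
      using has_real_derivative_at_if_within_nonneg[OF s(1) dF] s j by force
  qed (use assms in auto)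
  thus False by simp
qed

lemma position_spread_le:
  assumes "t \<ge> 0" and slowest: "\<And>s. s \<ge> 0 \<Longrightarrow> m \<le> velocity 0 s"
  shows "X N t - X 0 t \<le> X N 0 - X 0 0 + (vmax - m) * t"
proof -
  define g where "g s = (vmax - m) * s - (X N s - X 0 s)" for s
  have dg: "(g has_real_derivative velocity 0 s - m) (at s within {0..})" if "s \<ge> 0" for s
    using DERIV_diff[OF DERIV_cmult[OF DERIV_ident, of "vmax - m"]
        DERIV_diff[OF has_derivative_position[OF that order.refl] has_derivative_position[OF that]]]
    unfolding g_def[abs_def] by (simp add: velocity_def)
  have "g 0 \<le> g t"
  proof (rule DERIV_nonneg_imp_increasing_open[OF assms(1)])
    fix s assume "0 < s" "s < t"
    thus "\<exists>y. (g has_real_derivative y) (at s) \<and> 0 \<le> y"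
      using has_real_derivative_at_if_within_nonneg[OF _ dg, of s] slowest[of s] by force
  qed (use dg in \<open>intro continuous_on_if_has_real_derivative_within_nonneg, blast\<close>)
  thus ?thesis by (simp add: g_def algebra_simps)
qed

end

section \<open>Total variation of step functions\<close>

lemma steps_mono:
  fixes r :: "nat \<Rightarrow> real"
  assumes "\<forall>k<N. r k < r (Suc k)" "i \<le> j" "j \<le> N"
  shows "r i \<le> r j"
  by (rule lift_Suc_mono_le_ivl[of "{..<N}"]) (use assms in \<open>auto simp: less_imp_le\<close>)

text \<open>The number of breakpoints \<open>r 0 < \<dots> < r N\<close> to the left of \<open>z\<close>, so that \<open>z\<close> lies on the
  \<open>(step_index r N z)\<close>-th step, counting the left unbounded step as the \<open>0\<close>-th.\<close>

definition step_index :: "(nat \<Rightarrow> real) \<Rightarrow> nat \<Rightarrow> real \<Rightarrow> nat" where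
  "step_index r N z = card {k. k \<le> N \<and> r k \<le> z}"

lemma mono_step_index: "mono (step_index r N)"
  unfolding mono_def step_index_def by (auto intro!: card_mono)

lemma step_index_le: "step_index r N z \<le> Suc N"
  unfolding step_index_def using card_mono[of "{..N}" "{k. k \<le> N \<and> r k \<le> z}"] by auto

lemma less_step_index_iff:
  assumes incr: "\<forall>k<N. r k < r (Suc k)"
  shows "j < step_index r N z \<longleftrightarrow> j \<le> N \<and> r j \<le> z"
proof -
  let ?A = "{k. k \<le> N \<and> r k \<le> z}"
  have down: "j \<in> ?A" if "k \<in> ?A" "j \<le> k" for j k
    using steps_mono[OF incr, of j k] that by auto
  have "?A = {..<card ?A}"
  proof (cases "?A = {}")
    case False
    have fin: "finite ?A" by (rule finite_subset[of _ "{..N}"]) auto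
    define K where "K = Max ?A"
    have "K \<in> ?A" unfolding K_def by (rule Max_in[OF fin False])
    have "?A = {..K}"
    proof
      show "?A \<subseteq> {..K}" using Max_ge[OF fin] unfolding K_def by blast
      show "{..K} \<subseteq> ?A" using down[OF \<open>K \<in> ?A\<close>] by blast
    qed
    thus ?thesis by (simp only: card_atMost lessThan_Suc_atMost)
  qed (simp only: card.empty lessThan_0)
  hence "j \<in> ?A \<longleftrightarrow> j \<in> {..<card ?A}" by (rule arg_cong[where f="\<lambda>X. j \<in> X"])
  thus ?thesis unfolding step_index_def by simp
qed

lemma step_index_eq_Suc_iff:
  assumes incr: "\<forall>k<N. r k < r (Suc k)" and "i < N"
  shows "step_index r N z = Suc i \<longleftrightarrow> z \<in> {r i..<r (Suc i)}"
  using less_step_index_iff[OF incr, of i z] less_step_index_iff[OF incr, of "Suc i" z] \<open>i < N\<close>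
  by auto

lemma step_index_surj:
  assumes incr: "\<forall>k<N. r k < r (Suc k)" and "k \<le> Suc N"
  shows "\<exists>z. step_index r N z = k"
proof (cases k)
  case 0
  have "\<not> 0 < step_index r N (r 0 - 1)" using less_step_index_iff[OF incr] by simp
  thus ?thesis using 0 by blast
next
  case (Suc i)
  have "i < step_index r N (r i)" "\<not> Suc i < step_index r N (r i)"
    using less_step_index_iff[OF incr] incr[rule_format, of i] Suc \<open>k \<le> Suc N\<close> by auto
  thus ?thesis using Suc by (intro exI[of _ "r i"]) simp
qed

lemma sum_step_intervals:
  fixes g :: "nat \<Rightarrow> real"
  assumes incr: "\<forall>k<N. r k < r (Suc k)"
  shows "(\<Sum>i<N. g i * indicator {r i..<r (Suc i)} z)
    = (if step_index r N z \<in> {1..N} then g (step_index r N z - 1) else 0)"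
proof -
  have "(\<Sum>i<N. g i * indicator {r i..<r (Suc i)} z) = (\<Sum>i<N. if step_index r N z = Suc i then g i else 0)"
    by (rule sum.cong) (use step_index_eq_Suc_iff[OF incr] in \<open>auto simp: indicator_def\<close>)
  also have "\<dots> = (if step_index r N z \<in> {1..N} then g (step_index r N z - 1) else 0)"
  proof (cases "step_index r N z")
    case (Suc m)
    thus ?thesis by (simp add: sum.delta)
  qed simp
  finally show ?thesis .
qed

lemma sum_atLeastLessThan_chain:
  fixes J :: "nat \<Rightarrow> nat" and d :: "nat \<Rightarrow> real"
  assumes "\<And>k. k < m \<Longrightarrow> J k \<le> J (Suc k)"
  shows "(\<Sum>k<m. \<Sum>j\<in>{J k..<J (Suc k)}. d j) = (\<Sum>j\<in>{J 0..<J m}. d j) \<and> J 0 \<le> J m"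
  using assms
proof (induction m)
  case (Suc m)
  hence "(\<Sum>k<m. \<Sum>j\<in>{J k..<J (Suc k)}. d j) = (\<Sum>j\<in>{J 0..<J m}. d j)" "J 0 \<le> J m" "J m \<le> J (Suc m)"
    by auto
  thus ?case by (simp add: sum.atLeastLessThan_concat)
qed simp

lemma TV_comp_mono_index:
  fixes J :: "real \<Rightarrow> nat" and c :: "nat \<Rightarrow> real"
  assumes mono: "mono J" and bounded: "\<And>z. J z \<le> M" and onto: "\<And>k. k \<le> M \<Longrightarrow> \<exists>z. J z = k"
  shows "TV (\<lambda>z. c (J z)) = ereal (\<Sum>k<M. \<bar>c (Suc k) - c k\<bar>)"
proof (rule antisym)
  define d where "d j = \<bar>c (Suc j) - c j\<bar>" for j
  show "TV (\<lambda>z. c (J z)) \<le> ereal (\<Sum>k<M. \<bar>c (Suc k) - c k\<bar>)"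
    unfolding TV_def
  proof (rule SUP_least, clarify)
    fix m and s :: "nat \<Rightarrow> real" assume sorted: "\<forall>k<m. s k \<le> s (Suc k)"
    hence J_sorted: "J (s k) \<le> J (s (Suc k))" if "k < m" for k
      using that mono by (simp add: monoD)
    have "(\<Sum>k<m. \<bar>c (J (s (Suc k))) - c (J (s k))\<bar>) \<le> (\<Sum>k<m. \<Sum>j\<in>{J (s k)..<J (s (Suc k))}. d j)"
    proof (rule sum_mono)
      fix k assume "k \<in> {..<m}"
      hence "c (J (s (Suc k))) - c (J (s k)) = (\<Sum>j\<in>{J (s k)..<J (s (Suc k))}. c (Suc j) - c j)"
        using J_sorted by (simp add: sum_Suc_diff')
      thus "\<bar>c (J (s (Suc k))) - c (J (s k))\<bar> \<le> (\<Sum>j\<in>{J (s k)..<J (s (Suc k))}. d j)"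
        unfolding d_def using sum_abs by (metis (no_types))
    qed
    also have "\<dots> = (\<Sum>j\<in>{J (s 0)..<J (s m)}. d j)"
      using sum_atLeastLessThan_chain[of m "\<lambda>k. J (s k)" d] J_sorted by simp
    also have "\<dots> \<le> (\<Sum>j<M. d j)"
      using bounded[of "s m"] by (intro sum_mono2) (auto simp: d_def)
    finally show "ereal (\<Sum>k<fst (m, s). \<bar>c (J (snd (m, s) (Suc k))) - c (J (snd (m, s) k))\<bar>)
        \<le> ereal (\<Sum>k<M. \<bar>c (Suc k) - c k\<bar>)"
      by (simp add: d_def)
  qed
next
  define z where "z k = (SOME y. J y = k)" for k
  have z: "J (z k) = k" if "k \<le> M" for k
    using someI_ex[OF onto[OF that]] by (simp add: z_def)
  have "z k \<le> z (Suc k)" if "k < M" for k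
    using monoD[OF mono, of "z (Suc k)" "z k"] z[of k] z[of "Suc k"] that by force
  hence sorted: "(M, z) \<in> {(m, s). \<forall>k<m. s k \<le> s (Suc k)}" by simp
  have "ereal (\<Sum>k<M. \<bar>c (Suc k) - c k\<bar>)
      = ereal (\<Sum>k<fst (M, z). \<bar>c (J (snd (M, z) (Suc k))) - c (J (snd (M, z) k))\<bar>)"
    using z by simp
  also have "\<dots> \<le> TV (\<lambda>z. c (J z))"
    unfolding TV_def by (rule SUP_upper[OF sorted])
  finally show "ereal (\<Sum>k<M. \<bar>c (Suc k) - c k\<bar>) \<le> TV (\<lambda>z. c (J z))" .
qed

context follow_the_leader
begin

text \<open>The values of \<open>v(\<rho>)\<close> on the consecutive steps, from left to right.\<close>

definition velocity_profile :: "real \<Rightarrow> nat \<Rightarrow> real" where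
  "velocity_profile t k = (if k = 0 then vmax else velocity (k - 1) t)"

lemma v_step_density:
  assumes "\<forall>k<N. r k < r (Suc k)"
  shows "v (\<Sum>i<N. dens i t * indicator {r i..<r (Suc i)} z) = velocity_profile t (step_index r N z)"
  using step_index_le[of r N z] v_0
  by (cases "step_index r N z") (auto simp: sum_step_intervals[OF assms] velocity_profile_def velocity_def)

lemma TV_v_step_density:
  assumes "\<forall>k<N. r k < r (Suc k)"
  shows "TV (\<lambda>z. v (\<Sum>i<N. dens i t * indicator {r i..<r (Suc i)} z))
    = ereal (\<Sum>k<Suc N. \<bar>velocity_profile t (Suc k) - velocity_profile t k\<bar>)"
  unfolding v_step_density[OF assms]
  by (rule TV_comp_mono_index[OF mono_step_index step_index_le step_index_surj[OF assms]])

lemma velocity_profile_bounds: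
  assumes "\<And>i. i < N \<Longrightarrow> ell \<le> R * gap i 0" "0 \<le> R" "t \<ge> 0"
  shows "v R \<le> velocity_profile t k \<and> velocity_profile t k \<le> vmax"
  using v_le_velocity[OF assms] velocity_le_vmax[OF assms(3)] v_le_vmax[OF assms(2)]
  by (simp add: velocity_profile_def)

text \<open>The profile starts and ends at \<open>vmax\<close>, so its variation is twice the sum of its upward
  jumps, each of which the Oleinik estimate bounds by \<open>gap k t / t\<close>.\<close>

lemma sum_abs_profile_jumps_le:
  assumes "t > 0"
  shows "(\<Sum>k<Suc N. \<bar>velocity_profile t (Suc k) - velocity_profile t k\<bar>) \<le> 2 * (X N t - X 0 t) / t"
proof -
  define a where "a k = velocity (Suc k) t - velocity k t" for k
  have "(\<Sum>k<Suc N. \<bar>velocity_profile t (Suc k) - velocity_profile t k\<bar>)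
      = \<bar>velocity 0 t - vmax\<bar> + (\<Sum>k<N. \<bar>a k\<bar>)"
    unfolding sum.lessThan_Suc_shift by (simp add: velocity_profile_def a_def)
  moreover have "(\<Sum>k<N. a k) = vmax - velocity 0 t"
    unfolding a_def using sum_lessThan_telescope[of "\<lambda>k. velocity k t" N] by (simp add: velocity_def)
  moreover have "\<bar>a k\<bar> = 2 * max (a k) 0 - a k" for k by (simp add: max_def)
  hence "(\<Sum>k<N. \<bar>a k\<bar>) = 2 * (\<Sum>k<N. max (a k) 0) - (\<Sum>k<N. a k)"
    by (simp add: sum_subtractf sum_distrib_left)
  ultimately have "(\<Sum>k<Suc N. \<bar>velocity_profile t (Suc k) - velocity_profile t k\<bar>)
      = 2 * (\<Sum>k<N. max (a k) 0)"
    using velocity_le_vmax[of t 0] assms by simp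
  also have "\<dots> \<le> 2 * (\<Sum>k<N. gap k t / t)"
  proof -
    have "max (a k) 0 \<le> gap k t / t" if "k < N" for k
      using oleinik_estimate[OF assms that] gap_pos[of t k] assms that
      by (simp add: slope_def a_def[symmetric] field_simps)
    thus ?thesis by (intro mult_left_mono sum_mono) auto
  qed
  also have "\<dots> = 2 * (X N t - X 0 t) / t"
    using sum_lessThan_telescope[of "\<lambda>k. X k t" N] by (simp add: sum_divide_distrib[symmetric] gap_def)
  finally show ?thesis .
qed

lemma sum_abs_profile_jumps_le_bound:
  assumes "0 < \<delta>" "\<delta> \<le> t" and spread: "X N 0 - X 0 0 \<le> S"
    and slowest: "\<And>s. s \<ge> 0 \<Longrightarrow> m \<le> velocity 0 s"
  shows "(\<Sum>k<Suc N. \<bar>velocity_profile t (Suc k) - velocity_profile t k\<bar>) \<le> 3 * (vmax - m) + 2 * S / \<delta>"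
proof -
  have "t > 0" using assms by simp
  have m_le: "m \<le> vmax" using slowest[of 0] velocity_le_vmax[of 0 0] by simp
  have "X 0 0 \<le> X N 0" using steps_mono[of N "\<lambda>k. X k 0" 0 N] positions_ordered[of 0] by simp
  hence S_nonneg: "0 \<le> S" using spread by simp
  have "(\<Sum>k<Suc N. \<bar>velocity_profile t (Suc k) - velocity_profile t k\<bar>) \<le> 2 * (X N t - X 0 t) / t"
    by (rule sum_abs_profile_jumps_le[OF \<open>t > 0\<close>])
  also have "\<dots> \<le> 2 * (S + (vmax - m) * t) / t"
    using position_spread_le[of t m] slowest spread \<open>t > 0\<close> by (intro divide_right_mono) auto
  also have "\<dots> = 2 * S / t + 2 * (vmax - m)" using \<open>t > 0\<close> by (simp add: field_simps)
  also have "\<dots> \<le> 2 * S / \<delta> + 3 * (vmax - m)"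
    using divide_left_mono[of \<delta> t "2 * S"] S_nonneg m_le assms(1,2) by simp
  finally show ?thesis by simp
qed

end

lemma follow_the_leader_if_FTL_solution:
  assumes "\<And>r. r \<ge> 0 \<Longrightarrow> (v has_real_derivative v' r) (at r within {0..})"
    and "\<And>a b. 0 \<le> a \<Longrightarrow> a < b \<Longrightarrow> v b < v a" and "v 0 = vmax"
    and "\<And>a b. 0 \<le> a \<Longrightarrow> a \<le> b \<Longrightarrow> b * v' b \<le> a * v' a"
    and "L > 0" and "FTL_solution v vmax rho L x n"
  shows "follow_the_leader v v' vmax (elln L n) (Nn n) (x n)"
  by unfold_locales (use assms in \<open>auto simp: FTL_solution_def ydisc_def elln_def\<close>)

theorem proposition3p11:
  fixes v v' :: "real \<Rightarrow> real" and vmax L \<delta> :: real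
    and rho :: "real \<Rightarrow> real" and x :: "nat \<Rightarrow> nat \<Rightarrow> real \<Rightarrow> real"
  assumes V1_deriv: "\<And>r. r \<ge> 0 \<Longrightarrow> (v has_real_derivative v' r) (at r within {0..})"
    and V1_cont: "continuous_on {0..} v'"
    and V1_decr: "\<And>a b. 0 \<le> a \<Longrightarrow> a < b \<Longrightarrow> v b < v a"
    and V2: "v 0 = vmax"
    and V3: "\<And>a b. 0 \<le> a \<Longrightarrow> a \<le> b \<Longrightarrow> b * v' b \<le> a * v' a"
    and L_pos: "L > 0"
    and In_nonneg: "AE y in lborel. rho y \<ge> 0"
    and In_int: "integrable lborel rho"
    and In_mass: "(LINT y|lborel. rho y) = L"
    and In_supp: "bounded (msupp rho)"
    and In_Linf: "\<exists>c. AE y in lborel. \<bar>rho y\<bar> \<le> c"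
    and sol: "\<And>n. FTL_solution v vmax rho L x n"
    and delta_pos: "\<delta> > 0"
  shows "\<forall>n::nat. \<forall>t\<ge>\<delta>.
     TV (\<lambda>z. v (rho_hat L x n t z)) = TV (\<lambda>z. v (rho_check L x n t z)) \<and>
     TV (\<lambda>z. v (rho_hat L x n t z))
        \<le> ereal (3 * (vmax - v (Linf_norm rho)) + 2 * (xmax rho - xmin rho) / \<delta>) \<and>
     (\<forall>z. v (Linf_norm rho) \<le> v (rho_hat L x n t z) \<and> v (rho_hat L x n t z) \<le> vmax) \<and>
     (\<forall>z. v (Linf_norm rho) \<le> v (rho_check L x n t z) \<and> v (rho_check L x n t z) \<le> vmax)"
proof (intro allI impI)
  fix n :: nat and t :: real
  assume "\<delta> \<le> t"
  interpret F: follow_the_leader v v' vmax "elln L n" "Nn n" "x n"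
    by (rule follow_the_leader_if_FTL_solution[OF V1_deriv V1_decr V2 V3 L_pos sol])
  interpret M: finite_mass_density rho "Linf_norm rho" L
    by unfold_locales (use In_int In_nonneg AE_abs_le_Linf_norm[OF In_Linf] In_mass In_supp L_pos in auto)
  have t_nonneg: "0 \<le> t" using \<open>\<delta> \<le> t\<close> delta_pos by simp
  have init: "elln L n \<le> Linf_norm rho * F.gap i 0" if "i < Nn n" for i
    using M.FTL_initial_gap[OF sol that] by (simp add: F.gap_def)
  have hat: "rho_hat L x n t = (\<lambda>z. \<Sum>i<Nn n. F.dens i t * indicator {x n i t..<x n (Suc i) t} z)"
    and check: "rho_check L x n t =
        (\<lambda>z. \<Sum>i<Nn n. F.dens i t * indicator {real i * elln L n..<real (Suc i) * elln L n} z)"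
    by (simp_all add: rho_hat_def rho_check_def ydisc_def F.dens_def F.gap_def fun_eq_iff)
  have hat_incr: "\<forall>k<Nn n. x n k t < x n (Suc k) t"
    using F.positions_ordered[OF t_nonneg] by blast
  have check_incr: "\<forall>k<Nn n. real k * elln L n < real (Suc k) * elln L n"
    using F.ell_pos by simp
  have jumps: "(\<Sum>k<Suc (Nn n). \<bar>F.velocity_profile t (Suc k) - F.velocity_profile t k\<bar>)
      \<le> 3 * (vmax - v (Linf_norm rho)) + 2 * (xmax rho - xmin rho) / \<delta>"
    using F.sum_abs_profile_jumps_le_bound[OF delta_pos \<open>\<delta> \<le> t\<close> M.FTL_initial_spread[OF sol]]
      F.v_le_velocity[OF init M.bound_nonneg] by blast
  have bounds: "v (Linf_norm rho) \<le> F.velocity_profile t k \<and> F.velocity_profile t k \<le> vmax" for k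
    using F.velocity_profile_bounds[OF init M.bound_nonneg t_nonneg] .
  show "TV (\<lambda>z. v (rho_hat L x n t z)) = TV (\<lambda>z. v (rho_check L x n t z)) \<and>
     TV (\<lambda>z. v (rho_hat L x n t z))
        \<le> ereal (3 * (vmax - v (Linf_norm rho)) + 2 * (xmax rho - xmin rho) / \<delta>) \<and>
     (\<forall>z. v (Linf_norm rho) \<le> v (rho_hat L x n t z) \<and> v (rho_hat L x n t z) \<le> vmax) \<and>
     (\<forall>z. v (Linf_norm rho) \<le> v (rho_check L x n t z) \<and> v (rho_check L x n t z) \<le> vmax)"
    unfolding hat check F.TV_v_step_density[OF hat_incr] F.TV_v_step_density[OF check_incr]
    unfolding F.v_step_density[OF hat_incr] F.v_step_density[OF check_incr]
    using jumps bounds by simp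
qed

end
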